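(* For every finite bounded commutative BCK-algebra $\mathcal A$ and each of the equations $x=1$ and $\neg x=1$ (in one variable $x$), either the degree of satisfiability of the equation in $\mathcal A$ equals $1$ or it is at most $\frac12$. Thus both equations have finite satisfiability gap $\frac12$ among bounded commutative BCK-algebras, and this value is realized by the two-element algebra $\mathcal C_2$ (with $1=1$).
   Context: A BCK-algebra is a set $A$ with a binary operation $\cdot$ and a constant $0$ such that for all $x,y,z\in A$: (BCK1) $((x\cdot y)\cdot(x\cdot z))\cdot(z\cdot y)=0$; (BCK2) $(x\cdot(x\cdot y))\cdot y=0$; (BCK3) $x\cdot x=0$; (BCK4) $0\cdot x=0$; (BCK5) $x\cdot y=0$ and $y\cdot x=0$ imply $x=y$. Define $x\wedge y:=y\cdot(y\cdot x)$; the algebra is commutative if $x\wedge y=y\wedge x$ for all $x,y$. A bounded BCK-algebra is a BCK-algebra with a distinguished element $1$ with $x\cdot 1=0$ for all $x$; $\neg x:=1\cdot x$. The degree of satisfiability of a one-variable equation $\varphi(x)$ in a finite algebra $M$ is $|\{a\in M:\varphi(a)\}|/|M|$. $\mathcal C_2$ is the BCK-algebra on $\{0,1\}$ with $x\cdot y=\max\{x-y,0\}$. *)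

theory Defs
  imports Complex_Main
begin

definition bck_algebra :: "'a set \<Rightarrow> ('a \<Rightarrow> 'a \<Rightarrow> 'a) \<Rightarrow> 'a \<Rightarrow> bool" where
  "bck_algebra A m z \<longleftrightarrow>
     z \<in> A \<and> (\<forall>x\<in>A. \<forall>y\<in>A. m x y \<in> A) \<and>
     (\<forall>x\<in>A. \<forall>y\<in>A. \<forall>w\<in>A. m (m (m x y) (m x w)) (m w y) = z) \<and>
     (\<forall>x\<in>A. \<forall>y\<in>A. m (m x (m x y)) y = z) \<and>
     (\<forall>x\<in>A. m x x = z) \<and>
     (\<forall>x\<in>A. m z x = z) \<and>
     (\<forall>x\<in>A. \<forall>y\<in>A. m x y = z \<and> m y x = z \<longrightarrow> x = y)"

definition bck_meet :: "('a \<Rightarrow> 'a \<Rightarrow> 'a) \<Rightarrow> 'a \<Rightarrow> 'a \<Rightarrow> 'a" where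
  "bck_meet m x y = m y (m y x)"

definition commutative_bck :: "'a set \<Rightarrow> ('a \<Rightarrow> 'a \<Rightarrow> 'a) \<Rightarrow> 'a \<Rightarrow> bool" where
  "commutative_bck A m z \<longleftrightarrow> bck_algebra A m z \<and>
     (\<forall>x\<in>A. \<forall>y\<in>A. bck_meet m x y = bck_meet m y x)"

definition bounded_bck :: "'a set \<Rightarrow> ('a \<Rightarrow> 'a \<Rightarrow> 'a) \<Rightarrow> 'a \<Rightarrow> 'a \<Rightarrow> bool" where
  "bounded_bck A m z u \<longleftrightarrow> bck_algebra A m z \<and> u \<in> A \<and> (\<forall>x\<in>A. m x u = z)"

definition bck_neg :: "('a \<Rightarrow> 'a \<Rightarrow> 'a) \<Rightarrow> 'a \<Rightarrow> 'a \<Rightarrow> 'a" where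
  "bck_neg m u x = m u x"

definition dos :: "'a set \<Rightarrow> ('a \<Rightarrow> bool) \<Rightarrow> real" where
  "dos A \<phi> = real (card {a\<in>A. \<phi> a}) / real (card A)"

text \<open>The two-element algebra C_2 on {0,1} with x.y = max(x-y,0) (truncated nat subtraction).\<close>
definition C2_carrier :: "nat set" where "C2_carrier = {0, 1}"
definition C2_op :: "nat \<Rightarrow> nat \<Rightarrow> nat" where "C2_op x y = x - y"

end

theory Submission
  imports Defs
begin

text \<open>Each equation has exactly one solution: \<open>x = 1\<close> trivially, and \<open>\<not>x = 1\<close> only at
  \<open>x = 0\<close>, since commutativity gives \<open>\<not>\<not>x = x \<and> 1 = 1 \<and> x = x\<close>, so negation is
  an involution swapping \<open>0\<close> and \<open>1\<close>. A unique solution among \<open>n\<close> elements has degree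
  \<open>1/n\<close>, which is \<open>1\<close> or at most \<open>1/2\<close>; the two-element algebra attains \<open>1/2\<close>.\<close>

lemma dos_unique_solution:
  assumes "finite A" and "{a\<in>A. P a} = {u}"
  shows "dos A P = 1 \<or> dos A P \<le> 1/2"
proof -
  have "u \<in> A" using assms(2) by blast
  then have "card A \<ge> 1" using assms(1) by (metis One_nat_def Suc_leI card_gt_0_iff empty_iff)
  then consider "card A = 1" | "real (card A) \<ge> 2" by linarith
  then show ?thesis
    using assms(2) by cases (simp_all add: dos_def field_simps)
qed

lemma bck_right_zero:
  assumes "bck_algebra A m z" and "x \<in> A"
  shows "m x z = x"
proof -
  have zA: "z \<in> A" and closed: "\<And>a b. a\<in>A \<Longrightarrow> b\<in>A \<Longrightarrow> m a b \<in> A"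
    and bck2: "\<And>a b. a\<in>A \<Longrightarrow> b\<in>A \<Longrightarrow> m (m a (m a b)) b = z"
    and self: "\<And>a. a\<in>A \<Longrightarrow> m a a = z"
    and zero_left: "\<And>a. a\<in>A \<Longrightarrow> m z a = z"
    and antisym: "\<And>a b. a\<in>A \<Longrightarrow> b\<in>A \<Longrightarrow> m a b = z \<Longrightarrow> m b a = z \<Longrightarrow> a = b"
    using assms(1) unfolding bck_algebra_def by auto
  have "m (m x z) x = z"
    using bck2[OF assms(2) assms(2)] self[OF assms(2)] by simp
  moreover have "m x (m x z) = z"
  proof (rule antisym)
    show "m (m x (m x z)) z = z" using bck2[OF assms(2) zA] .
    show "m z (m x (m x z)) = z" using zero_left closed assms(2) zA by blast
  qed (use closed assms(2) zA in blast)+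
  ultimately show ?thesis using antisym closed assms(2) zA by blast
qed

lemma bck_neg_neg:
  assumes "bounded_bck A m z u" and "commutative_bck A m z" and "x \<in> A"
  shows "bck_neg m u (bck_neg m u x) = x"
proof -
  have bck: "bck_algebra A m z" and uA: "u \<in> A" and top: "m x u = z"
    using assms(1,3) unfolding bounded_bck_def by auto
  have "bck_neg m u (bck_neg m u x) = bck_meet m x u"
    by (simp add: bck_neg_def bck_meet_def)
  also have "\<dots> = bck_meet m u x"
    using assms(2,3) uA unfolding commutative_bck_def by blast
  also have "\<dots> = x"
    using top bck_right_zero[OF bck assms(3)] by (simp add: bck_meet_def)
  finally show ?thesis .
qed

lemma bck_neg_eq_top_iff:
  assumes "bounded_bck A m z u" and "commutative_bck A m z" and "x \<in> A"
  shows "bck_neg m u x = u \<longleftrightarrow> x = z"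
proof -
  have bck: "bck_algebra A m z" and uA: "u \<in> A"
    using assms(1) unfolding bounded_bck_def by auto
  have neg_top: "bck_neg m u u = z"
    using bck uA unfolding bck_algebra_def bck_neg_def by blast
  have neg_zero: "bck_neg m u z = u"
    using bck_right_zero[OF bck uA] by (simp add: bck_neg_def)
  show ?thesis
    using bck_neg_neg[OF assms] neg_top neg_zero by metis
qed

lemma C2_bounded_bck: "bounded_bck C2_carrier C2_op 0 1"
  by (simp add: bounded_bck_def bck_algebra_def C2_carrier_def C2_op_def)

lemma C2_commutative_bck: "commutative_bck C2_carrier C2_op 0"
  by (simp add: commutative_bck_def bck_meet_def bck_algebra_def C2_carrier_def C2_op_def)

theorem proposition4p3:
  shows "(\<forall>(A :: 'a set) m z u.
            finite A \<and> bounded_bck A m z u \<and> commutative_bck A m z \<longrightarrow>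
              (dos A (\<lambda>x. x = u) = 1 \<or> dos A (\<lambda>x. x = u) \<le> 1/2) \<and>
              (dos A (\<lambda>x. bck_neg m u x = u) = 1 \<or> dos A (\<lambda>x. bck_neg m u x = u) \<le> 1/2))
         \<and> bounded_bck C2_carrier C2_op 0 1 \<and> commutative_bck C2_carrier C2_op 0
         \<and> dos C2_carrier (\<lambda>x. x = 1) = 1/2
         \<and> dos C2_carrier (\<lambda>x. bck_neg C2_op 1 x = 1) = 1/2"
proof (intro conjI allI impI C2_bounded_bck C2_commutative_bck)
  fix A :: "'a set" and m z u
  assume "finite A \<and> bounded_bck A m z u \<and> commutative_bck A m z"
  then have fin: "finite A" and bd: "bounded_bck A m z u" and com: "commutative_bck A m z"
    by auto
  have "{a\<in>A. a = u} = {u}" using bd unfolding bounded_bck_def by blast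
  then show "dos A (\<lambda>x. x = u) = 1 \<or> dos A (\<lambda>x. x = u) \<le> 1/2"
    by (rule dos_unique_solution[OF fin])
  have "z \<in> A" using bd unfolding bounded_bck_def bck_algebra_def by blast
  then have "{a\<in>A. bck_neg m u a = u} = {z}"
    using bck_neg_eq_top_iff[OF bd com] by blast
  then show "dos A (\<lambda>x. bck_neg m u x = u) = 1 \<or> dos A (\<lambda>x. bck_neg m u x = u) \<le> 1/2"
    by (rule dos_unique_solution[OF fin])
next
  have "{a\<in>C2_carrier. a = 1} = {1}"
    by (auto simp: C2_carrier_def)
  then show "dos C2_carrier (\<lambda>x. x = 1) = 1/2"
    by (simp add: dos_def C2_carrier_def)
  have "{a\<in>C2_carrier. bck_neg C2_op 1 a = 1} = {0}"
    by (auto simp: C2_carrier_def bck_neg_def C2_op_def)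
  then show "dos C2_carrier (\<lambda>x. bck_neg C2_op 1 x = 1) = 1/2"
    by (simp add: dos_def C2_carrier_def)
qed

end
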